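(* Let $\mathcal{X}$ be a Polish space, $J:\mathcal{X}\to[0,+\infty]$ lower semicontinuous, and $Q\in\mathcal{P}(\mathcal{X})$. Then $$\sup_{f\in C_b(\mathcal{X})}\Big\{\int f\,dQ-\sup_{x\in\mathcal{X}}(f(x)-J(x))\Big\}=\int J\,dQ.$$ More generally, if $(\mathcal{X}_n^Q)_{n\ge1}$ is an increasing sequence of closed subsets of $\mathcal{X}$ with $\lim_nQ(\mathcal{X}_n^Q)=1$ and $\mathcal{G}_Q=\bigcup_{n\ge1}\mathcal{C}(\mathcal{X}_n^Q)$, where $\mathcal{C}(\mathcal{X}_o)=\{\mathbf{1}_{\mathcal{X}_o}\tilde f:\tilde f\in C_b(\mathcal{X})\}$, then the same identity holds with $C_b(\mathcal{X})$ replaced by $\mathcal{G}_Q$.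
   Context: $C_b(\mathcal{X})$: bounded continuous real functions; $\mathbf{1}_{\mathcal{X}_o}$ the indicator function of $\mathcal{X}_o$. *)

theory Defs
  imports "HOL-Analysis.Analysis" "HOL-Probability.Probability"
begin

definition lsc :: "('a::topological_space \<Rightarrow> ennreal) \<Rightarrow> bool" where
  "lsc J \<longleftrightarrow> (\<forall>c. closed {x. J x \<le> c})"

definition Cb :: "('a::topological_space \<Rightarrow> real) set" where
  "Cb = {f. continuous_on UNIV f \<and> bounded (range f)}"

definition restrC :: "'a::topological_space set \<Rightarrow> ('a \<Rightarrow> real) set" where
  "restrC Xo = {(\<lambda>x. indicator Xo x * g x) | g. g \<in> Cb}"

definition GQ :: "(nat \<Rightarrow> 'a::topological_space set) \<Rightarrow> ('a \<Rightarrow> real) set" where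
  "GQ Xs = (\<Union>n. restrC (Xs n))"

end

theory Submission
  imports Defs
begin

text \<open>
  Write \<open>dual_value J Q f = \<integral>f dQ - sup\<^sub>x (f x - J x)\<close>.
  (1) Weak duality: for every bounded measurable \<open>f\<close> we have \<open>f - s \<le> J\<close> with
      \<open>s = sup\<^sub>x (f x - J x)\<close>, hence \<open>dual_value J Q f \<le> \<integral>J dQ\<close>.
  (2) Every lower semicontinuous \<open>J \<ge> 0\<close> on a metric space is the increasing pointwise
      limit of bounded Lipschitz functions \<open>0 \<le> g\<^sub>k \<le> J\<close>: truncate \<open>J\<close> at level \<open>k\<close> and
      take the inf-convolution with \<open>k \<cdot> dist\<close> (the Pasch--Hausdorff envelope).
  (3) Hence, by monotone convergence, the supremum of \<open>dual_value\<close> over any class \<open>G\<close> of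
      bounded measurable functions equals \<open>\<integral>J dQ\<close> as soon as \<open>G\<close> is "rich":
      \<open>\<integral>h dQ \<le> sup\<^sub>G dual_value\<close> for every bounded continuous \<open>0 \<le> h \<le> J\<close>.
  (4) \<open>C\<^sub>b\<close> is rich since \<open>h \<le> J\<close> forces \<open>dual_value J Q h \<ge> \<integral>h dQ\<close>; the class \<open>G\<^sub>Q\<close> is
      rich because \<open>\<integral>1\<^bsub>X\<^sub>n\<^esub> h dQ \<ge> \<integral>h dQ - \<parallel>h\<parallel>\<^sub>\<infinity> Q(X \<setminus> X\<^sub>n) \<rightarrow> \<integral>h dQ\<close>.
\<close>

definition dual_value :: "('a \<Rightarrow> ennreal) \<Rightarrow> 'a measure \<Rightarrow> ('a \<Rightarrow> real) \<Rightarrow> ereal" where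
  "dual_value J Q f = ereal (integral\<^sup>L Q f) - (SUP x. ereal (f x) - enn2ereal (J x))"

lemma Cb_bounded:
  assumes "f \<in> Cb"
  obtains B where "\<And>x. \<bar>f x\<bar> \<le> B"
proof -
  obtain B where "\<forall>y\<in>range f. norm y \<le> B" using assms unfolding Cb_def bounded_iff by blast
  then have "\<bar>f x\<bar> \<le> B" for x by auto
  then show thesis by (rule that)
qed

lemma Cb_measurable:
  assumes "f \<in> Cb" and "sets Q = sets borel"
  shows "f \<in> borel_measurable Q"
proof -
  have "f \<in> borel_measurable borel"
    using assms(1) by (intro borel_measurable_continuous_onI) (simp add: Cb_def)
  then show ?thesis by (simp add: measurable_cong_sets[OF assms(2) refl])
qed

lemma Cb_integrable:
  assumes "f \<in> Cb" and "sets Q = sets borel" and "finite_measure Q"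
  shows "integrable Q f"
proof -
  interpret finite_measure Q by (rule assms(3))
  obtain B where "\<And>x. \<bar>f x\<bar> \<le> B" using Cb_bounded[OF assms(1)] by metis
  then show ?thesis
    using Cb_measurable[OF assms(1,2)] by (intro integrable_const_bound[where B=B]) auto
qed

subsection \<open>Lipschitz approximation of lower semicontinuous functions\<close>

text \<open>The inf-convolution of \<open>h\<close> with \<open>L \<cdot> dist\<close>: the largest \<open>L\<close>-Lipschitz minorant of \<open>h\<close>.\<close>

definition lipschitz_envelope :: "real \<Rightarrow> ('a::metric_space \<Rightarrow> real) \<Rightarrow> 'a \<Rightarrow> real" where
  "lipschitz_envelope L h x = (INF y. h y + L * dist x y)"

context
  fixes L :: real and h :: "'a::metric_space \<Rightarrow> real"
  assumes L_nonneg: "0 \<le> L" and h_nonneg: "\<And>y. 0 \<le> h y"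
begin

lemma lipschitz_envelope_le: "lipschitz_envelope L h x \<le> h y + L * dist x y"
  unfolding lipschitz_envelope_def
  by (rule cINF_lower)
     (auto intro!: bdd_belowI[of _ 0] add_nonneg_nonneg h_nonneg L_nonneg mult_nonneg_nonneg)

lemma lipschitz_envelope_nonneg: "0 \<le> lipschitz_envelope L h x"
  unfolding lipschitz_envelope_def
  by (rule cINF_greatest) (auto intro!: add_nonneg_nonneg h_nonneg L_nonneg mult_nonneg_nonneg)

lemma lipschitz_envelope_below: "lipschitz_envelope L h x \<le> h x"
  using lipschitz_envelope_le[of x x] by simp

lemma lipschitz_envelope_lipschitz: "L-lipschitz_on UNIV (lipschitz_envelope L h)"
proof -
  have one_side: "lipschitz_envelope L h x \<le> lipschitz_envelope L h x' + L * dist x x'" for x x'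
  proof -
    have "lipschitz_envelope L h x - L * dist x x' \<le> h y + L * dist x' y" for y
    proof -
      have "L * dist x y \<le> L * dist x x' + L * dist x' y"
        using mult_left_mono[OF dist_triangle[of x y x'] L_nonneg] by (simp add: distrib_left)
      then show ?thesis using lipschitz_envelope_le[of x y] by linarith
    qed
    then have "lipschitz_envelope L h x - L * dist x x' \<le> lipschitz_envelope L h x'"
      unfolding lipschitz_envelope_def[of L h x'] by (intro cINF_greatest) auto
    then show ?thesis by linarith
  qed
  show ?thesis unfolding lipschitz_on_def
  proof (intro conjI ballI L_nonneg)
    fix x y :: 'a
    show "dist (lipschitz_envelope L h x) (lipschitz_envelope L h y) \<le> L * dist x y"
      using one_side[of x y] one_side[of y x] by (simp add: dist_real_def dist_commute abs_le_iff)
  qed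
qed

end

lemma lipschitz_envelope_mono:
  assumes "0 \<le> L" "L \<le> L'" "\<And>y. 0 \<le> h y" "\<And>y. h y \<le> h' y"
  shows "lipschitz_envelope L h x \<le> lipschitz_envelope L' h' x"
  unfolding lipschitz_envelope_def[of L' h' x]
proof (rule cINF_greatest)
  fix y
  have "L * dist x y \<le> L' * dist x y" using assms(2) by (simp add: mult_right_mono)
  then show "lipschitz_envelope L h x \<le> h' y + L' * dist x y"
    using lipschitz_envelope_le[of L h x y, OF assms(1,3)] assms(4)[of y] by linarith
qed simp

definition truncate :: "nat \<Rightarrow> ('a \<Rightarrow> ennreal) \<Rightarrow> 'a \<Rightarrow> real" where
  "truncate k J x = enn2real (min (J x) (of_nat k))"

lemma ennreal_truncate: "ennreal (truncate k J x) = min (J x) (of_nat k)"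
  by (simp add: truncate_def ennreal_enn2real_if min_def top_unique)

lemma truncate_nonneg: "0 \<le> truncate k J x"
  by (simp add: truncate_def)

lemma truncate_mono: "k \<le> k' \<Longrightarrow> truncate k J x \<le> truncate k' J x"
  using ennreal_truncate[of k J x] ennreal_truncate[of k' J x]
  by (metis ennreal_le_iff min.mono order_refl of_nat_mono truncate_nonneg)

definition lsc_approx :: "nat \<Rightarrow> ('a::metric_space \<Rightarrow> ennreal) \<Rightarrow> 'a \<Rightarrow> real" where
  "lsc_approx k J = lipschitz_envelope (real k) (truncate k J)"

lemma lsc_approx_nonneg: "0 \<le> lsc_approx k J x"
  unfolding lsc_approx_def by (rule lipschitz_envelope_nonneg) (auto intro: truncate_nonneg)

lemma lsc_approx_below: "ennreal (lsc_approx k J x) \<le> J x"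
proof -
  have "lsc_approx k J x \<le> truncate k J x"
    unfolding lsc_approx_def by (rule lipschitz_envelope_below) (auto intro: truncate_nonneg)
  then have "ennreal (lsc_approx k J x) \<le> ennreal (truncate k J x)" by (rule ennreal_leI)
  then show ?thesis unfolding ennreal_truncate by simp
qed

lemma lsc_approx_incseq: "lsc_approx k J x \<le> lsc_approx (Suc k) J x"
  unfolding lsc_approx_def
  by (rule lipschitz_envelope_mono) (auto intro: truncate_nonneg truncate_mono)

lemma lsc_approx_Cb: "lsc_approx k J \<in> Cb"
proof -
  have "continuous_on UNIV (lsc_approx k J)"
    unfolding lsc_approx_def
    by (rule lipschitz_on_continuous_on, rule lipschitz_envelope_lipschitz)
       (auto intro: truncate_nonneg)
  moreover have "\<bar>lsc_approx k J x\<bar> \<le> real k" for x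
  proof -
    have "ennreal (lsc_approx k J x) \<le> ennreal (truncate k J x)"
      unfolding lsc_approx_def
      by (intro ennreal_leI lipschitz_envelope_below) (auto intro: truncate_nonneg)
    also have "\<dots> \<le> ennreal (real k)"
      unfolding ennreal_truncate by (simp add: ennreal_of_nat_eq_real_of_nat)
    finally show ?thesis using lsc_approx_nonneg[of k J x] by (simp add: ennreal_le_iff)
  qed
  then have "bounded (range (lsc_approx k J))"
    unfolding bounded_iff by auto
  ultimately show ?thesis unfolding Cb_def by simp
qed

text \<open>Lower semicontinuity is exactly what makes the envelopes converge up to \<open>J\<close>: if
  \<open>c < J x\<close> then \<open>J > c\<close> on a ball of radius \<open>r\<close> around \<open>x\<close>, and for \<open>k \<ge> c + c/r\<close>
  both terms of the infimum defining \<open>g\<^sub>k x\<close> are at least \<open>c\<close>.\<close>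

lemma lsc_approx_SUP:
  assumes "lsc J"
  shows "(SUP k. ennreal (lsc_approx k J x)) = J x"
proof (rule antisym)
  show "(SUP k. ennreal (lsc_approx k J x)) \<le> J x"
    by (rule SUP_least) (rule lsc_approx_below)
  show "J x \<le> (SUP k. ennreal (lsc_approx k J x))"
  proof (rule dense_le)
    fix y assume y: "y < J x"
    define c where "c = enn2real y"
    have c_nonneg: "0 \<le> c" and yc: "y = ennreal c"
      using y by (auto simp: c_def ennreal_enn2real_if)
    have "open (- {z. J z \<le> ennreal c})"
      using assms unfolding lsc_def by blast
    moreover have "x \<in> - {z. J z \<le> ennreal c}" using y yc by auto
    ultimately obtain r where r: "r > 0" "ball x r \<subseteq> - {z. J z \<le> ennreal c}"
      unfolding open_contains_ball by blast
    obtain k :: nat where k: "c + c / r \<le> real k" using real_arch_simple by blast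
    have c_le_k: "c \<le> real k"
      using k c_nonneg r by (smt (verit) divide_nonneg_pos)
    have "c / r \<le> real k" using k c_nonneg by linarith
    then have c_le_kr: "c \<le> real k * r" using r by (simp add: divide_le_eq)
    have "c \<le> truncate k J z + real k * dist x z" for z
    proof (cases "dist x z < r")
      case True
      then have "ennreal c < J z" using r by auto
      moreover have "ennreal c \<le> of_nat k"
        using c_le_k by (simp add: ennreal_of_nat_eq_real_of_nat ennreal_leI)
      ultimately have "ennreal c \<le> ennreal (truncate k J z)" unfolding ennreal_truncate by simp
      then show ?thesis using truncate_nonneg[of k J z]
        by (simp add: ennreal_le_iff add_increasing2)
    next
      case False
      then have "real k * r \<le> real k * dist x z" by (simp add: mult_left_mono)
      then show ?thesis using c_le_kr truncate_nonneg[of k J z] by linarith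
    qed
    then have "c \<le> lsc_approx k J x"
      unfolding lsc_approx_def lipschitz_envelope_def by (intro cINF_greatest) auto
    then have "y \<le> ennreal (lsc_approx k J x)" using yc by (simp add: ennreal_leI)
    also have "\<dots> \<le> (SUP k. ennreal (lsc_approx k J x))" by (rule SUP_upper) simp
    finally show "y \<le> (SUP k. ennreal (lsc_approx k J x))" .
  qed
qed

lemma lsc_approx_le_enn2ereal: "ereal (lsc_approx k J x) \<le> enn2ereal (J x)"
  using lsc_approx_below[of k J x] lsc_approx_nonneg[of k J x]
  by (metis enn2ereal_ennreal less_eq_ennreal.rep_eq)

subsection \<open>The dual functional\<close>

text \<open>Weak duality (a Fenchel--Young inequality): with \<open>s = sup\<^sub>x (f x - J x)\<close> we have
  \<open>f - s \<le> J\<close> pointwise, so \<open>\<integral>f dQ - s \<le> \<integral>J dQ\<close>.\<close>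

lemma dual_value_le_nn_integral:
  fixes J :: "'a \<Rightarrow> ennreal" and f :: "'a \<Rightarrow> real"
  assumes Q: "prob_space Q" and f_meas: "f \<in> borel_measurable Q" and f_bounded: "\<And>x. \<bar>f x\<bar> \<le> B"
  shows "dual_value J Q f \<le> enn2ereal (\<integral>\<^sup>+ x. J x \<partial>Q)"
proof -
  interpret prob_space Q by (rule Q)
  define S where "S = (SUP x. ereal (f x) - enn2ereal (J x))"
  have S_upper: "ereal (f x) - enn2ereal (J x) \<le> S" for x unfolding S_def by (rule SUP_upper) simp
  have "ereal (integral\<^sup>L Q f) - S \<le> enn2ereal (\<integral>\<^sup>+ x. J x \<partial>Q)"
  proof (cases "(\<integral>\<^sup>+ x. J x \<partial>Q) = top")
    case False
    then obtain r where r: "0 \<le> r" "(\<integral>\<^sup>+ x. J x \<partial>Q) = ennreal r"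
      by (cases "(\<integral>\<^sup>+ x. J x \<partial>Q)" rule: ennreal_cases) auto
    show ?thesis
    proof (cases S)
      case (real s)
      have "ennreal (f x - s) \<le> J x" for x
      proof (cases "J x" rule: ennreal_cases)
        case (real j)
        then have "f x - s \<le> j" using S_upper[of x] \<open>S = ereal s\<close> by simp
        then show ?thesis using real by (simp add: ennreal_leI)
      qed simp
      then have "(\<integral>\<^sup>+ x. ennreal (f x - s) \<partial>Q) \<le> ennreal r"
        using r(2) by (metis nn_integral_mono)
      then have "integral\<^sup>L Q (\<lambda>x. f x - s) \<le> r"
        using r(1) by (intro integral_real_bounded) auto
      moreover have "integrable Q f"
        by (rule integrable_const_bound[where B=B]) (use f_bounded f_meas in auto)
      then have "integral\<^sup>L Q (\<lambda>x. f x - s) = integral\<^sup>L Q f - s"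
        by (simp add: prob_space)
      ultimately show ?thesis using r \<open>S = ereal s\<close> by simp
    next
      case MInf
      text \<open>\<open>S = -\<infinity>\<close> forces \<open>J = \<infinity>\<close> everywhere, contradicting finiteness of \<open>\<integral>J dQ\<close>.\<close>
      have "J x = top" for x
        using S_upper[of x] MInf by (cases "J x" rule: ennreal_cases) auto
      then show ?thesis using False by (simp add: emeasure_space_1)
    qed simp
  qed simp
  then show ?thesis by (simp add: dual_value_def S_def)
qed

lemma integral_le_dual_value:
  fixes J :: "'a \<Rightarrow> ennreal" and f :: "'a \<Rightarrow> real"
  assumes "\<And>x. ereal (f x) \<le> enn2ereal (J x)"
  shows "ereal (integral\<^sup>L Q f) \<le> dual_value J Q f"
proof -
  have "ereal (f x) - enn2ereal (J x) \<le> 0" for x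
    using assms[of x] by (cases "J x" rule: ennreal_cases) (auto simp: enn2ereal_ennreal)
  then have "(SUP x. ereal (f x) - enn2ereal (J x)) \<le> 0" by (rule SUP_least)
  then show ?thesis unfolding dual_value_def
    using ereal_minus_mono[of "ereal (integral\<^sup>L Q f)" _ _ 0] by simp
qed

text \<open>The lower bound uses the approximants \<open>lsc_approx k J\<close> and monotone
  convergence.\<close>

lemma SUP_dual_value_eq_nn_integral:
  fixes J :: "'a::metric_space \<Rightarrow> ennreal" and G :: "('a \<Rightarrow> real) set"
  assumes J: "lsc J" and Q: "prob_space Q" and sets_Q: "sets Q = sets borel"
    and G_meas: "\<And>f. f \<in> G \<Longrightarrow> f \<in> borel_measurable Q"
    and G_bounded: "\<And>f. f \<in> G \<Longrightarrow> \<exists>B. \<forall>x. \<bar>f x\<bar> \<le> B"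
    and G_rich: "\<And>h. h \<in> Cb \<Longrightarrow> (\<And>x. 0 \<le> h x) \<Longrightarrow> (\<And>x. ereal (h x) \<le> enn2ereal (J x))
                   \<Longrightarrow> ereal (integral\<^sup>L Q h) \<le> (SUP f\<in>G. dual_value J Q f)"
  shows "(SUP f\<in>G. dual_value J Q f) = enn2ereal (\<integral>\<^sup>+ x. J x \<partial>Q)"
proof (rule antisym)
  interpret prob_space Q by (rule Q)
  show "(SUP f\<in>G. dual_value J Q f) \<le> enn2ereal (\<integral>\<^sup>+ x. J x \<partial>Q)"
  proof (rule SUP_least)
    fix f assume "f \<in> G"
    then obtain B where "\<forall>x. \<bar>f x\<bar> \<le> B" using G_bounded by blast
    then show "dual_value J Q f \<le> enn2ereal (\<integral>\<^sup>+ x. J x \<partial>Q)"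
      using G_meas[OF \<open>f \<in> G\<close>] by (intro dual_value_le_nn_integral[OF Q]) auto
  qed
  define g where "g k = lsc_approx k J" for k
  have g_meas: "g k \<in> borel_measurable Q" for k
    unfolding g_def using lsc_approx_Cb sets_Q by (rule Cb_measurable)
  have g_int: "integrable Q (g k)" for k
    unfolding g_def using lsc_approx_Cb sets_Q finite_measure_axioms by (rule Cb_integrable)
  have "(\<integral>\<^sup>+ x. J x \<partial>Q) = (\<integral>\<^sup>+ x. (SUP k. ennreal (g k x)) \<partial>Q)"
    by (simp add: g_def lsc_approx_SUP[OF J])
  also have "\<dots> = (SUP k. \<integral>\<^sup>+ x. ennreal (g k x) \<partial>Q)"
  proof (rule nn_integral_monotone_convergence_SUP)
    show "incseq (\<lambda>k x. ennreal (g k x))"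
      by (rule incseq_SucI) (simp add: g_def le_fun_def lsc_approx_incseq ennreal_leI)
  qed (use g_meas in auto)
  also have "\<dots> = (SUP k. ennreal (integral\<^sup>L Q (g k)))"
    by (intro SUP_cong refl nn_integral_eq_integral g_int) (auto simp: g_def lsc_approx_nonneg)
  finally have monotone_limit: "(\<integral>\<^sup>+ x. J x \<partial>Q) = (SUP k. ennreal (integral\<^sup>L Q (g k)))" .
  have g_integral_nonneg: "0 \<le> integral\<^sup>L Q (g k)" for k
    by (rule integral_nonneg_AE) (simp add: g_def lsc_approx_nonneg)
  have g_dominated: "ereal (integral\<^sup>L Q (g k)) \<le> (SUP f\<in>G. dual_value J Q f)" for k
    unfolding g_def
    by (rule G_rich) (auto intro: lsc_approx_Cb lsc_approx_nonneg lsc_approx_le_enn2ereal)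
  have "enn2ereal (SUP k. ennreal (integral\<^sup>L Q (g k)))
      = sup 0 (SUP k. ereal (integral\<^sup>L Q (g k)))"
    using g_integral_nonneg by (simp add: Sup_ennreal.rep_eq image_image enn2ereal_ennreal)
  also have "\<dots> \<le> (SUP f\<in>G. dual_value J Q f)"
  proof (rule sup_least)
    show "0 \<le> (SUP f\<in>G. dual_value J Q f)"
      using g_integral_nonneg[of 0] g_dominated[of 0]
      by (metis ereal_less_eq(3) order_trans zero_ereal_def)
    show "(SUP k. ereal (integral\<^sup>L Q (g k))) \<le> (SUP f\<in>G. dual_value J Q f)"
      by (rule SUP_least) (rule g_dominated)
  qed
  finally show "enn2ereal (\<integral>\<^sup>+ x. J x \<partial>Q) \<le> (SUP f\<in>G. dual_value J Q f)"
    by (simp add: monotone_limit)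
qed

lemma restrC_bounded:
  assumes "f \<in> restrC X"
  shows "\<exists>B. \<forall>x. \<bar>f x\<bar> \<le> B"
proof -
  obtain g where g: "g \<in> Cb" and f: "f = (\<lambda>x. indicator X x * g x)"
    using assms unfolding restrC_def by blast
  obtain B where B: "\<And>x. \<bar>g x\<bar> \<le> B" using Cb_bounded[OF g] by metis
  have "\<bar>f x\<bar> \<le> B" for x
    using B[of x] abs_ge_zero[of "g x"] by (auto simp: f indicator_def)
  then show ?thesis by blast
qed

lemma restrC_measurable:
  assumes "f \<in> restrC X" and "closed X" and "sets Q = sets borel"
  shows "f \<in> borel_measurable Q"
proof -
  obtain g where g: "g \<in> Cb" and f: "f = (\<lambda>x. indicator X x * g x)"
    using assms(1) unfolding restrC_def by blast
  have "X \<in> sets Q" using assms(2,3) by simp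
  then show ?thesis
    unfolding f using Cb_measurable[OF g assms(3)] by measurable
qed

lemma integral_indicator_mult_ge:
  fixes h :: "'a \<Rightarrow> real"
  assumes Q: "prob_space Q" and X: "X \<in> sets Q" and h_int: "integrable Q h"
    and h_bounds: "\<And>x. 0 \<le> h x" "\<And>x. h x \<le> B"
  shows "integral\<^sup>L Q h - B * (1 - measure Q X) \<le> integral\<^sup>L Q (\<lambda>x. indicator X x * h x)"
proof -
  interpret prob_space Q by (rule Q)
  have ind_int: "integrable Q (indicator X :: 'a \<Rightarrow> real)"
    using X by (intro integrable_real_indicator) (auto simp: emeasure_eq_measure)
  have restr_int: "integrable Q (\<lambda>x. indicator X x * h x)"
    using integrable_real_mult_indicator[OF X h_int] by (simp add: mult.commute)
  have "integral\<^sup>L Q (\<lambda>x. h x - indicator X x * h x) \<le> integral\<^sup>L Q (\<lambda>x. B - B * indicator X x)"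
  proof (rule integral_mono)
    show "h x - indicator X x * h x \<le> B - B * indicator X x" for x
      using h_bounds[of x] by (cases "x \<in> X") auto
  qed (use h_int restr_int ind_int in auto)
  moreover have "integral\<^sup>L Q (\<lambda>x. B - B * indicator X x) = B - B * measure Q X"
    using ind_int X by (simp add: prob_space Int_absorb2 sets.sets_into_space)
  ultimately show ?thesis
    using h_int restr_int by (simp add: algebra_simps)
qed

text \<open>Richness of \<open>G\<^sub>Q\<close>: each \<open>1\<^bsub>X\<^sub>n\<^esub> h\<close> belongs to \<open>G\<^sub>Q\<close> and lies below \<open>J\<close>, and its
  integral tends to \<open>\<integral>h dQ\<close> because \<open>Q(X\<^sub>n) \<rightarrow> 1\<close>.\<close>

lemma integral_le_SUP_dual_value_GQ:
  fixes J :: "'a::topological_space \<Rightarrow> ennreal" and h :: "'a \<Rightarrow> real"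
  assumes Q: "prob_space Q" and sets_Q: "sets Q = sets borel"
    and closed: "\<And>n. closed (Xs n)" and lim: "(\<lambda>n. measure Q (Xs n)) \<longlonglongrightarrow> 1"
    and h: "h \<in> Cb" "\<And>x. 0 \<le> h x" "\<And>x. ereal (h x) \<le> enn2ereal (J x)"
  shows "ereal (integral\<^sup>L Q h) \<le> (SUP f\<in>GQ Xs. dual_value J Q f)"
proof -
  interpret prob_space Q by (rule Q)
  obtain B where B: "\<And>x. \<bar>h x\<bar> \<le> B" using Cb_bounded[OF h(1)] by metis
  have restr_bound: "ereal (integral\<^sup>L Q h - B * (1 - measure Q (Xs n)))
      \<le> (SUP f\<in>GQ Xs. dual_value J Q f)" for n
  proof -
    let ?F = "\<lambda>x. indicator (Xs n) x * h x"
    have "?F \<in> GQ Xs" unfolding GQ_def restrC_def using h(1) by blast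
    have "?F x \<le> h x" for x using h(2)[of x] by (cases "x \<in> Xs n") auto
    then have F_le_J: "ereal (?F x) \<le> enn2ereal (J x)" for x
      using h(3)[of x] by (meson ereal_less_eq(3) order_trans)
    have "integral\<^sup>L Q h - B * (1 - measure Q (Xs n)) \<le> integral\<^sup>L Q ?F"
      using B closed sets_Q
      by (intro integral_indicator_mult_ge Q Cb_integrable[OF h(1) sets_Q] finite_measure_axioms h(2))
         (auto simp: abs_le_iff)
    then have "ereal (integral\<^sup>L Q h - B * (1 - measure Q (Xs n))) \<le> ereal (integral\<^sup>L Q ?F)"
      by simp
    also have "\<dots> \<le> dual_value J Q ?F" by (rule integral_le_dual_value[OF F_le_J])
    also have "\<dots> \<le> (SUP f\<in>GQ Xs. dual_value J Q f)" by (rule SUP_upper) fact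
    finally show ?thesis .
  qed
  have "(\<lambda>n. ereal (integral\<^sup>L Q h - B * (1 - measure Q (Xs n))))
          \<longlonglongrightarrow> ereal (integral\<^sup>L Q h - B * (1 - 1))"
    by (intro tendsto_ereal tendsto_intros lim)
  then have "(\<lambda>n. ereal (integral\<^sup>L Q h - B * (1 - measure Q (Xs n))))
          \<longlonglongrightarrow> ereal (integral\<^sup>L Q h)"
    by simp
  then show ?thesis by (rule LIMSEQ_le_const2) (use restr_bound in blast)
qed

theorem mainTheorem12:
  fixes J :: "'a::polish_space \<Rightarrow> ennreal" and Q :: "'a measure"
  assumes "lsc J" and "prob_space Q" and "sets Q = sets borel"
  shows "(SUP f\<in>Cb. ereal (integral\<^sup>L Q f) - (SUP x. ereal (f x) - enn2ereal (J x)))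
           = enn2ereal (\<integral>\<^sup>+ x. J x \<partial>Q)
    \<and> (\<forall>Xs :: nat \<Rightarrow> 'a set. (\<forall>n. closed (Xs n)) \<and> incseq Xs
           \<and> (\<lambda>n. measure Q (Xs n)) \<longlonglongrightarrow> 1 \<longrightarrow>
         (SUP f\<in>GQ Xs. ereal (integral\<^sup>L Q f) - (SUP x. ereal (f x) - enn2ereal (J x)))
           = enn2ereal (\<integral>\<^sup>+ x. J x \<partial>Q))"
proof -
  have "(SUP f\<in>Cb. dual_value J Q f) = enn2ereal (\<integral>\<^sup>+ x. J x \<partial>Q)"
  proof (rule SUP_dual_value_eq_nn_integral[OF assms])
    show "ereal (integral\<^sup>L Q h) \<le> (SUP f\<in>Cb. dual_value J Q f)"
      if "h \<in> Cb" "\<And>x. ereal (h x) \<le> enn2ereal (J x)" for h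
      using integral_le_dual_value[OF that(2)] SUP_upper[OF that(1)] by (rule order_trans)
  qed (use Cb_measurable[OF _ assms(3)] Cb_bounded in metis)+
  moreover have "(SUP f\<in>GQ Xs. dual_value J Q f) = enn2ereal (\<integral>\<^sup>+ x. J x \<partial>Q)"
    if "\<forall>n. closed (Xs n)" and "(\<lambda>n. measure Q (Xs n)) \<longlonglongrightarrow> 1" for Xs
    using that
    by (intro SUP_dual_value_eq_nn_integral[OF assms] integral_le_SUP_dual_value_GQ[OF assms(2,3)])
       (auto simp: GQ_def intro: restrC_bounded restrC_measurable[OF _ _ assms(3)])
  ultimately show ?thesis unfolding dual_value_def by blast
qed

end
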